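(* Let $n\ge1$, fix $\beta\in\partial\mathbb{D}$, and on $\mathbb{D}^{n-1}$ (coordinates $\alpha_0,\dots,\alpha_{n-2}$) use the Poisson bracket described in the context. Let $P_n,Q_n$ be as in the context, $F_n(z)=-Q_n(z)/P_n(z)$ and $f_n(w)=w^{-1}\frac{F_n(w)-1}{F_n(w)+1}$. Then \[ \{P_n(z),F_n(w)\}=-\frac{i}{2}\Bigl[\bigl(P_n(z)F_n(w)+Q_n(z)\bigr)\frac{z+w}{z-w}-P_n(z)-Q_n(z)F_n(w)\Bigr], \] \[ \{Q_n(z),F_n(w)\}=-F_n(w)\,\{P_n(z),F_n(w)\}, \] \[ \{P_n(z),f_n(w)\}=(1-wf_n(w))W_n(z,w),\qquad \{Q_n(z),f_n(w)\}=-(1+wf_n(w))W_n(z,w), \] where \[ W_n(z,w)=-\frac{i}{2}\,\frac{\bigl(P_n(z)+Q_n(z)\bigr)+z\bigl(P_n(z)-Q_n(z)\bigr)f_n(w)}{z-w}. \]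
   Context: Let $\rho_j=(1-|\alpha_j|^2)^{1/2}$; the Poisson bracket is $\{f,g\}=\sum_{j=0}^{n-2}i\rho_j^2\bigl(\frac{\partial f}{\partial\bar\alpha_j}\frac{\partial g}{\partial\alpha_j}-\frac{\partial f}{\partial\alpha_j}\frac{\partial g}{\partial\bar\alpha_j}\bigr)$ (Wirtinger derivatives), i.e. $\{\alpha_j,\alpha_k\}=0$, $\{\alpha_j,\bar\alpha_k\}=-i\rho_j^2\delta_{jk}$; $z,w$ are held fixed. The monic OPUC satisfy $\Phi_0=1$, $\Phi_{k+1}(z)=z\Phi_k(z)-\bar\alpha_k\Phi_k^*(z)$ with $\Phi_k^*(z)=z^k\overline{\Phi_k(1/\bar z)}$; $\Psi_k$ satisfies the same recursion with $\alpha_j$ replaced by $-\alpha_j$; $P_n(z)=z\Phi_{n-1}(z)-\bar\beta\Phi_{n-1}^*(z)$, $Q_n(z)=z\Psi_{n-1}(z)+\bar\beta\Psi_{n-1}^*(z)$. The identities hold wherever the denominators are nonzero. *)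

theory Defs
  imports "HOL-Analysis.Analysis" "HOL-Computational_Algebra.Polynomial"
begin

text \<open>Verblunsky coefficients are given as a sequence alpha :: nat => complex;
only alpha 0, ..., alpha (n-2) matter.\<close>

text \<open>Reversed polynomial p^*(z) = z^k conj(p(1/conj z)), for p of degree at most k,
written as a polynomial (so that it is also defined at z = 0).\<close>
definition opuc_star :: "nat \<Rightarrow> complex poly \<Rightarrow> complex poly" where
  "opuc_star k p = (\<Sum>j\<le>k. monom (cnj (coeff p (k - j))) j)"

fun Phi :: "(nat \<Rightarrow> complex) \<Rightarrow> nat \<Rightarrow> complex poly" where
  "Phi \<alpha> 0 = 1"
| "Phi \<alpha> (Suc k) = [:0, 1:] * Phi \<alpha> k - smult (cnj (\<alpha> k)) (opuc_star k (Phi \<alpha> k))"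

definition Psi :: "(nat \<Rightarrow> complex) \<Rightarrow> nat \<Rightarrow> complex poly" where
  "Psi \<alpha> k = Phi (\<lambda>j. - \<alpha> j) k"

definition Pn :: "complex \<Rightarrow> nat \<Rightarrow> (nat \<Rightarrow> complex) \<Rightarrow> complex \<Rightarrow> complex" where
  "Pn \<beta> n \<alpha> z = z * poly (Phi \<alpha> (n - 1)) z
      - cnj \<beta> * poly (opuc_star (n - 1) (Phi \<alpha> (n - 1))) z"

definition Qn :: "complex \<Rightarrow> nat \<Rightarrow> (nat \<Rightarrow> complex) \<Rightarrow> complex \<Rightarrow> complex" where
  "Qn \<beta> n \<alpha> z = z * poly (Psi \<alpha> (n - 1)) z
      + cnj \<beta> * poly (opuc_star (n - 1) (Psi \<alpha> (n - 1))) z"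

definition Fn :: "complex \<Rightarrow> nat \<Rightarrow> (nat \<Rightarrow> complex) \<Rightarrow> complex \<Rightarrow> complex" where
  "Fn \<beta> n \<alpha> w = - Qn \<beta> n \<alpha> w / Pn \<beta> n \<alpha> w"

definition fn_small :: "complex \<Rightarrow> nat \<Rightarrow> (nat \<Rightarrow> complex) \<Rightarrow> complex \<Rightarrow> complex" where
  "fn_small \<beta> n \<alpha> w = (1 / w) * ((Fn \<beta> n \<alpha> w - 1) / (Fn \<beta> n \<alpha> w + 1))"

definition Wn :: "complex \<Rightarrow> nat \<Rightarrow> (nat \<Rightarrow> complex) \<Rightarrow> complex \<Rightarrow> complex \<Rightarrow> complex" where
  "Wn \<beta> n \<alpha> z w = - (\<i> / 2) *
     (((Pn \<beta> n \<alpha> z + Qn \<beta> n \<alpha> z) + z * (Pn \<beta> n \<alpha> z - Qn \<beta> n \<alpha> z) * fn_small \<beta> n \<alpha> w)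
      / (z - w))"

definition dRe :: "((nat \<Rightarrow> complex) \<Rightarrow> complex) \<Rightarrow> nat \<Rightarrow> (nat \<Rightarrow> complex) \<Rightarrow> complex" where
  "dRe f j \<alpha> = vector_derivative (\<lambda>t::real. f (\<alpha>(j := \<alpha> j + of_real t))) (at 0)"

definition dIm :: "((nat \<Rightarrow> complex) \<Rightarrow> complex) \<Rightarrow> nat \<Rightarrow> (nat \<Rightarrow> complex) \<Rightarrow> complex" where
  "dIm f j \<alpha> = vector_derivative (\<lambda>t::real. f (\<alpha>(j := \<alpha> j + \<i> * of_real t))) (at 0)"

definition wirt :: "((nat \<Rightarrow> complex) \<Rightarrow> complex) \<Rightarrow> nat \<Rightarrow> (nat \<Rightarrow> complex) \<Rightarrow> complex" where
  "wirt f j \<alpha> = (dRe f j \<alpha> - \<i> * dIm f j \<alpha>) / 2"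

definition wirt_bar :: "((nat \<Rightarrow> complex) \<Rightarrow> complex) \<Rightarrow> nat \<Rightarrow> (nat \<Rightarrow> complex) \<Rightarrow> complex" where
  "wirt_bar f j \<alpha> = (dRe f j \<alpha> + \<i> * dIm f j \<alpha>) / 2"

definition pbracket :: "nat \<Rightarrow> ((nat \<Rightarrow> complex) \<Rightarrow> complex) \<Rightarrow> ((nat \<Rightarrow> complex) \<Rightarrow> complex)
    \<Rightarrow> (nat \<Rightarrow> complex) \<Rightarrow> complex" where
  "pbracket n f g \<alpha> = (\<Sum>j<n - 1. \<i> * of_real (1 - (cmod (\<alpha> j))\<^sup>2) *
       (wirt_bar f j \<alpha> * wirt g j \<alpha> - wirt f j \<alpha> * wirt_bar g j \<alpha>))"

end

theory Submission
  imports Defs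
begin

(* The Szego recursion reads (Phi_(k+1), Phi_(k+1)^* ) = A(alpha_k, x) (Phi_k, Phi_k^* ) with
   A(alpha, x) = [[x, -conj alpha], [-alpha x, 1]].  Hence Phi_k, Phi_k^*, Psi_k, Psi_k^* are linear
   combinations of the entries of the transfer matrix T_k(x) = A(alpha_(k-1), x) ... A(alpha_0, x), and
   P_n, Q_n are the row (x, -conj beta) T_(n-1)(x) applied to (1, 1) and (1, -1).
   As A(alpha_k, x) depends on alpha_k only, the Leibniz rule and induction on k show that the entries
   of T_k satisfy the quadratic r-matrix bracket
     {T(z) (x) T(w)} = i/(z - w) [T(z) (x) T(w), r(z, w)];
   the inductive step is a finite computation with the Wirtinger derivatives of A.
   Contracting with the boundary vectors gives {P(z), P(w)} = {Q(z), Q(w)} = 0 and an explicit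
   {P(z), Q(w)} = -{Q(z), P(w)}.  The bracket is a derivation in its second argument, so the formulas
   for F_n = -Q_n/P_n and for its Moebius transform f_n follow by the chain rule. *)

section \<open>Wirtinger derivatives in one coordinate\<close>

text \<open>\<open>D\<close> and \<open>Db\<close> play the roles of \<open>\<partial>f/\<partial>\<alpha>\<^sub>j\<close> and \<open>\<partial>f/\<partial>cnj \<alpha>\<^sub>j\<close>.\<close>

definition has_wirtinger_derivs ::
    "((nat \<Rightarrow> complex) \<Rightarrow> complex) \<Rightarrow> nat \<Rightarrow> (nat \<Rightarrow> complex) \<Rightarrow> complex \<Rightarrow> complex \<Rightarrow> bool" where
  "has_wirtinger_derivs f j a D Db \<longleftrightarrow>
     (\<forall>v \<in> {1, \<i>}. ((\<lambda>t::real. f (a(j := a j + v * of_real t))) has_vector_derivative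
                      (v * D + cnj v * Db)) (at 0))"

definition wirtinger_differentiable ::
    "((nat \<Rightarrow> complex) \<Rightarrow> complex) \<Rightarrow> nat \<Rightarrow> (nat \<Rightarrow> complex) \<Rightarrow> bool" where
  "wirtinger_differentiable f j a \<longleftrightarrow> (\<exists>D Db. has_wirtinger_derivs f j a D Db)"

lemma has_wirtinger_derivsI:
  assumes "\<And>v. v \<in> {1, \<i>} \<Longrightarrow>
    ((\<lambda>t::real. f (a(j := a j + v * of_real t))) has_vector_derivative (v * D + cnj v * Db)) (at 0)"
  shows "has_wirtinger_derivs f j a D Db"
  using assms unfolding has_wirtinger_derivs_def by blast

lemma has_wirtinger_derivsD:
  assumes "has_wirtinger_derivs f j a D Db" "v \<in> {1, \<i>}"
  shows "((\<lambda>t::real. f (a(j := a j + v * of_real t))) has_vector_derivative (v * D + cnj v * Db)) (at 0)"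
  using assms unfolding has_wirtinger_derivs_def by blast

lemma
  assumes "has_wirtinger_derivs f j a D Db"
  shows wirt_eqI: "wirt f j a = D" and wirt_bar_eqI: "wirt_bar f j a = Db"
proof -
  have re: "dRe f j a = D + Db" and im: "dIm f j a = \<i> * D - \<i> * Db"
    using has_wirtinger_derivsD[OF assms, of 1] has_wirtinger_derivsD[OF assms, of \<i>]
    unfolding dRe_def dIm_def by (auto dest!: vector_derivative_at)
  show "wirt f j a = D" "wirt_bar f j a = Db"
    unfolding wirt_def wirt_bar_def re im by (simp_all add: algebra_simps)
qed

lemma has_wirtinger_derivs_wirt:
  "wirtinger_differentiable f j a \<Longrightarrow> has_wirtinger_derivs f j a (wirt f j a) (wirt_bar f j a)"
  unfolding wirtinger_differentiable_def using wirt_eqI wirt_bar_eqI by blast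

lemma has_wirtinger_derivs_eq_rhs:
  "has_wirtinger_derivs f j a D Db \<Longrightarrow> D = D' \<Longrightarrow> Db = Db' \<Longrightarrow> has_wirtinger_derivs f j a D' Db'"
  by simp

lemma has_wirtinger_derivs_coordinate_indep:
  assumes "\<And>c. f (a(j := c)) = f a"
  shows "has_wirtinger_derivs f j a 0 0"
  by (rule has_wirtinger_derivsI) (simp add: assms)

lemma has_wirtinger_derivs_const: "has_wirtinger_derivs (\<lambda>b. c) j a 0 0"
  by (rule has_wirtinger_derivs_coordinate_indep) (rule refl)

lemma has_wirtinger_derivs_coord: "has_wirtinger_derivs (\<lambda>b. b j) j a 1 0"
  by (rule has_wirtinger_derivsI) (auto intro!: derivative_eq_intros)

lemma has_wirtinger_derivs_cnj_coord: "has_wirtinger_derivs (\<lambda>b. cnj (b j)) j a 0 1"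
  by (rule has_wirtinger_derivsI) (auto intro!: derivative_eq_intros)

lemma has_wirtinger_derivs_add:
  assumes "has_wirtinger_derivs f j a D1 Db1" "has_wirtinger_derivs g j a D2 Db2"
  shows "has_wirtinger_derivs (\<lambda>b. f b + g b) j a (D1 + D2) (Db1 + Db2)"
  by (rule has_wirtinger_derivsI, rule has_vector_derivative_eq_rhs,
      rule has_vector_derivative_add[OF assms[THEN has_wirtinger_derivsD]])
     (simp_all add: algebra_simps)

lemma has_wirtinger_derivs_diff:
  assumes "has_wirtinger_derivs f j a D1 Db1" "has_wirtinger_derivs g j a D2 Db2"
  shows "has_wirtinger_derivs (\<lambda>b. f b - g b) j a (D1 - D2) (Db1 - Db2)"
  by (rule has_wirtinger_derivsI, rule has_vector_derivative_eq_rhs,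
      rule has_vector_derivative_diff[OF assms[THEN has_wirtinger_derivsD]])
     (simp_all add: algebra_simps)

lemma has_wirtinger_derivs_sum:
  assumes "\<And>i. i \<in> I \<Longrightarrow> has_wirtinger_derivs (f i) j a (D i) (Db i)"
  shows "has_wirtinger_derivs (\<lambda>b. \<Sum>i\<in>I. f i b) j a (\<Sum>i\<in>I. D i) (\<Sum>i\<in>I. Db i)"
  by (rule has_wirtinger_derivsI, rule has_vector_derivative_eq_rhs,
      rule has_vector_derivative_sum[OF assms[THEN has_wirtinger_derivsD]])
     (simp_all add: sum_distrib_left sum.distrib)

lemma has_wirtinger_derivs_mult:
  assumes "has_wirtinger_derivs f j a D1 Db1" "has_wirtinger_derivs g j a D2 Db2"
  shows "has_wirtinger_derivs (\<lambda>b. f b * g b) j a (f a * D2 + D1 * g a) (f a * Db2 + Db1 * g a)"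
  by (rule has_wirtinger_derivsI, rule has_vector_derivative_eq_rhs,
      rule has_vector_derivative_mult[OF assms[THEN has_wirtinger_derivsD]])
     (simp_all add: algebra_simps)

lemma has_wirtinger_derivs_compose:
  assumes "has_wirtinger_derivs f j a D Db" "(g has_field_derivative g') (at (f a))"
  shows "has_wirtinger_derivs (\<lambda>b. g (f b)) j a (g' * D) (g' * Db)"
proof (rule has_wirtinger_derivsI)
  fix v :: complex assume v: "v \<in> {1, \<i>}"
  have "(g has_field_derivative g') (at ((\<lambda>t::real. f (a(j := a j + v * of_real t))) 0))"
    using assms(2) by simp
  from field_vector_diff_chain_at[OF has_wirtinger_derivsD[OF assms(1) v] this]
  show "((\<lambda>t::real. g (f (a(j := a j + v * of_real t)))) has_vector_derivative
          (v * (g' * D) + cnj v * (g' * Db))) (at 0)"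
    unfolding comp_def by (rule has_vector_derivative_eq_rhs) (simp add: algebra_simps)
qed

lemma has_wirtinger_derivs_cmult:
  "has_wirtinger_derivs f j a D Db \<Longrightarrow> has_wirtinger_derivs (\<lambda>b. c * f b) j a (c * D) (c * Db)"
  by (rule has_wirtinger_derivs_compose) (auto intro!: derivative_eq_intros)

section \<open>Linearity of the Poisson bracket\<close>

lemma pbracket_Suc_Suc:
  "pbracket (Suc (Suc k)) f g a = pbracket (Suc k) f g a + \<i> * (1 - a k * cnj (a k)) *
     (wirt_bar f k a * wirt g k a - wirt f k a * wirt_bar g k a)"
proof -
  have "complex_of_real ((cmod (a k))\<^sup>2) = a k * cnj (a k)"
    using complex_norm_square[of "a k"] by simp
  then show ?thesis unfolding pbracket_def by simp
qed

lemma pbracket_bilinear: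
  assumes "\<And>j. j < n - 1 \<Longrightarrow> wirt F j a = (\<Sum>p\<in>I. c p * wirt (Fs p) j a)"
    and "\<And>j. j < n - 1 \<Longrightarrow> wirt_bar F j a = (\<Sum>p\<in>I. c p * wirt_bar (Fs p) j a)"
    and "\<And>j. j < n - 1 \<Longrightarrow> wirt G j a = (\<Sum>s\<in>J. d s * wirt (Gs s) j a)"
    and "\<And>j. j < n - 1 \<Longrightarrow> wirt_bar G j a = (\<Sum>s\<in>J. d s * wirt_bar (Gs s) j a)"
  shows "pbracket n F G a = (\<Sum>p\<in>I. \<Sum>s\<in>J. c p * d s * pbracket n (Fs p) (Gs s) a)"
proof -
  define \<rho> where "\<rho> j = \<i> * complex_of_real (1 - (cmod (a j))\<^sup>2)" for j
  define K where "K p s j = wirt_bar (Fs p) j a * wirt (Gs s) j a - wirt (Fs p) j a * wirt_bar (Gs s) j a"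
    for p s j
  have "wirt_bar F j a * wirt G j a - wirt F j a * wirt_bar G j a = (\<Sum>p\<in>I. \<Sum>s\<in>J. c p * d s * K p s j)"
    if "j < n - 1" for j
    unfolding assms[OF that] K_def sum_product right_diff_distrib sum_subtractf[symmetric]
    by (intro sum.cong refl) (simp only: mult_ac)
  then have "pbracket n F G a = (\<Sum>j<n - 1. \<rho> j * (\<Sum>p\<in>I. \<Sum>s\<in>J. c p * d s * K p s j))"
    unfolding pbracket_def \<rho>_def by (intro sum.cong refl) simp
  also have "\<dots> = (\<Sum>p\<in>I. \<Sum>s\<in>J. \<Sum>j<n - 1. c p * d s * (\<rho> j * K p s j))"
    unfolding sum_distrib_left by (subst sum.swap, subst sum.swap) (simp only: mult_ac)
  also have "\<dots> = (\<Sum>p\<in>I. \<Sum>s\<in>J. c p * d s * pbracket n (Fs p) (Gs s) a)"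
    unfolding pbracket_def \<rho>_def K_def sum_distrib_left ..
  finally show ?thesis .
qed

lemma pbracket_right_linear:
  assumes "\<And>j. j < n - 1 \<Longrightarrow> has_wirtinger_derivs H j a
             (c * wirt G1 j a + d * wirt G2 j a) (c * wirt_bar G1 j a + d * wirt_bar G2 j a)"
  shows "pbracket n F H a = c * pbracket n F G1 a + d * pbracket n F G2 a"
  unfolding pbracket_def sum_distrib_left sum.distrib[symmetric]
  by (intro sum.cong refl) (simp add: wirt_eqI[OF assms] wirt_bar_eqI[OF assms] algebra_simps)

lemma pbracket_right_compose:
  assumes "\<And>j. j < n - 1 \<Longrightarrow> wirtinger_differentiable H j a" "(g has_field_derivative g') (at (H a))"
  shows "pbracket n G (\<lambda>b. g (H b)) a = g' * pbracket n G H a"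
  using pbracket_right_linear[of n "\<lambda>b. g (H b)" a g' H 0 H G]
    has_wirtinger_derivs_compose[OF has_wirtinger_derivs_wirt[OF assms(1)] assms(2)]
  by simp

section \<open>Transfer matrices of the Szego recursion\<close>

lemma coeff_opuc_star: "coeff (opuc_star k p) i = (if i \<le> k then cnj (coeff p (k - i)) else 0)"
  unfolding opuc_star_def by (simp add: coeff_sum coeff_monom)

lemma degree_opuc_star: "degree (opuc_star k p) \<le> k"
  by (rule degree_le) (simp add: coeff_opuc_star)

lemma degree_Phi: "degree (Phi a k) \<le> k"
proof (induction k)
  case (Suc k)
  then have "degree ([:0, 1:] * Phi a k) \<le> Suc k"
    by (simp add: degree_pCons_eq_if)
  moreover have "degree (smult (cnj (a k)) (opuc_star k (Phi a k))) \<le> Suc k"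
    using degree_opuc_star[of k "Phi a k"] by (meson degree_smult_le le_SucI order_trans)
  ultimately show ?case by (simp add: degree_diff_le)
qed simp

lemma opuc_star_Phi_Suc:
  "opuc_star (Suc k) (Phi a (Suc k)) = opuc_star k (Phi a k) - smult (a k) (pCons 0 (Phi a k))"
proof (rule poly_eqI)
  fix i
  show "coeff (opuc_star (Suc k) (Phi a (Suc k))) i =
          coeff (opuc_star k (Phi a k) - smult (a k) (pCons 0 (Phi a k))) i"
  proof (cases i)
    case (Suc m)
    then show ?thesis
      using degree_Phi[of a k]
      by (auto simp: coeff_opuc_star coeff_eq_0 coeff_pCons split: nat.split
          intro!: arg_cong[of _ _ "coeff (Phi a k)"])
  qed (simp add: coeff_opuc_star)
qed

text \<open>2 \<open>\<times>\<close> 2 matrices are functions \<open>nat \<Rightarrow> nat \<Rightarrow> complex\<close> whose indices range over \<open>{0, 1}\<close>.\<close>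

definition szego_step :: "complex \<Rightarrow> complex \<Rightarrow> nat \<Rightarrow> nat \<Rightarrow> complex" where
  "szego_step al x p p' =
     (if p = 0 then (if p' = 0 then x else - cnj al) else (if p' = 0 then - al * x else 1))"

fun transfer :: "nat \<Rightarrow> (nat \<Rightarrow> complex) \<Rightarrow> complex \<Rightarrow> nat \<Rightarrow> nat \<Rightarrow> complex" where
  "transfer 0 a x p q = (if p = q then 1 else 0)"
| "transfer (Suc k) a x p q = (\<Sum>p'<2. szego_step (a k) x p p' * transfer k a x p' q)"

lemma transfer_Suc_fun:
  "transfer (Suc k) a x = (\<lambda>p q. \<Sum>p'<2. szego_step (a k) x p p' * transfer k a x p' q)"
  by (simp add: fun_eq_iff)

lemma sum_lessThan_2: "(\<Sum>i<2. f i) = f 0 + f (1::nat)"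
  by (simp add: numeral_2_eq_2)

lemma lessThan_2_times_lessThan_2: "{..<2::nat} \<times> {..<2::nat} = {(0, 0), (0, 1), (1, 0), (1, 1)}"
  by (auto simp: less_2_cases_iff)

lemma poly_Phi_transfer:
  "poly (Phi a k) x = transfer k a x 0 0 + transfer k a x 0 1 \<and>
   poly (opuc_star k (Phi a k)) x = transfer k a x 1 0 + transfer k a x 1 1"
proof (induction k)
  case 0
  have "opuc_star 0 1 = 1" unfolding opuc_star_def by (simp add: one_pCons)
  then show ?case by simp
next
  case (Suc k)
  show ?case
    unfolding opuc_star_Phi_Suc
    by (simp add: Suc.IH sum_lessThan_2 szego_step_def) (simp add: algebra_simps)
qed

lemma poly_Psi_transfer:
  "poly (Psi a k) x = transfer k a x 0 0 - transfer k a x 0 1 \<and>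
   poly (opuc_star k (Psi a k)) x = transfer k a x 1 1 - transfer k a x 1 0"
  unfolding Psi_def
proof (induction k)
  case 0
  have "opuc_star 0 1 = 1" unfolding opuc_star_def by (simp add: one_pCons)
  then show ?case by simp
next
  case (Suc k)
  show ?case
    unfolding opuc_star_Phi_Suc
    by (simp add: Suc.IH sum_lessThan_2 szego_step_def) (simp add: algebra_simps)
qed

lemma transfer_coordinate_indep: "k \<le> j \<Longrightarrow> transfer k (a(j := c)) x p q = transfer k a x p q"
  by (induction k arbitrary: p q) auto

lemma has_wirtinger_derivs_szego_step:
  "has_wirtinger_derivs (\<lambda>b. szego_step (b k) x p p') k a
     (if p \<noteq> 0 \<and> p' = 0 then - x else 0) (if p = 0 \<and> p' \<noteq> 0 then - 1 else 0)"
  unfolding szego_step_def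
  by (auto intro!: has_wirtinger_derivs_const
        has_wirtinger_derivs_compose[OF has_wirtinger_derivs_coord, THEN has_wirtinger_derivs_eq_rhs]
        has_wirtinger_derivs_compose[OF has_wirtinger_derivs_cnj_coord, THEN has_wirtinger_derivs_eq_rhs]
        derivative_eq_intros)

lemma has_wirtinger_derivs_transfer_Suc:
  assumes "\<And>p'. has_wirtinger_derivs (\<lambda>b. szego_step (b k) x p p') j a (DS p') (DbS p')"
    and "\<And>p'. has_wirtinger_derivs (\<lambda>b. transfer k b x p' q) j a (DT p') (DbT p')"
  shows "has_wirtinger_derivs (\<lambda>b. transfer (Suc k) b x p q) j a
           (\<Sum>p'<2. szego_step (a k) x p p' * DT p' + DS p' * transfer k a x p' q)
           (\<Sum>p'<2. szego_step (a k) x p p' * DbT p' + DbS p' * transfer k a x p' q)"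
  unfolding transfer.simps by (intro has_wirtinger_derivs_sum has_wirtinger_derivs_mult assms)

lemma wirtinger_differentiable_transfer: "wirtinger_differentiable (\<lambda>b. transfer k b x p q) j a"
proof (induction k arbitrary: p q)
  case 0
  show ?case
    unfolding wirtinger_differentiable_def by (auto intro: has_wirtinger_derivs_const)
next
  case (Suc k)
  have "wirtinger_differentiable (\<lambda>b. szego_step (b k) x p p') j a" for p'
    using has_wirtinger_derivs_szego_step
      has_wirtinger_derivs_coordinate_indep[of "\<lambda>b. szego_step (b k) x p p'" a j]
    unfolding wirtinger_differentiable_def by (cases "j = k") (blast, auto)
  then show ?case
    using has_wirtinger_derivs_transfer_Suc[OF has_wirtinger_derivs_wirt has_wirtinger_derivs_wirt[OF Suc.IH]]
    unfolding wirtinger_differentiable_def by blast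
qed

lemma has_wirtinger_derivs_transfer_Suc_below:
  assumes "j < k"
  shows "has_wirtinger_derivs (\<lambda>b. transfer (Suc k) b x p q) j a
           (\<Sum>p'<2. szego_step (a k) x p p' * wirt (\<lambda>b. transfer k b x p' q) j a)
           (\<Sum>p'<2. szego_step (a k) x p p' * wirt_bar (\<lambda>b. transfer k b x p' q) j a)"
  using has_wirtinger_derivs_transfer_Suc[OF
      has_wirtinger_derivs_coordinate_indep has_wirtinger_derivs_wirt[OF wirtinger_differentiable_transfer]]
    assms by simp

lemma has_wirtinger_derivs_transfer_Suc_last:
  "has_wirtinger_derivs (\<lambda>b. transfer (Suc k) b x p q) k a
     (if p = 0 then 0 else - x * transfer k a x 0 q) (if p = 0 then - transfer k a x 1 q else 0)"
  by (rule has_wirtinger_derivs_eq_rhs[OF has_wirtinger_derivs_transfer_Suc[OF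
        has_wirtinger_derivs_szego_step has_wirtinger_derivs_coordinate_indep]])
     (simp_all add: transfer_coordinate_indep sum_lessThan_2)

section \<open>The r-matrix bracket of transfer matrices\<close>

definition r_matrix :: "complex \<Rightarrow> complex \<Rightarrow> nat \<Rightarrow> nat \<Rightarrow> nat \<Rightarrow> nat \<Rightarrow> complex" where
  "r_matrix z w p s q t =
     (if (p, s) = (0, 1) then (if (q, t) = (0, 1) then - w else if (q, t) = (1, 0) then w else 0)
      else if (p, s) = (1, 0) then (if (q, t) = (0, 1) then z else if (q, t) = (1, 0) then - z else 0)
      else 0)"

text \<open>The commutator \<open>(X \<otimes> Y) r - r (X \<otimes> Y)\<close> of 4 \<open>\<times>\<close> 4 matrices, with row index \<open>(p, s)\<close> and
  column index \<open>(q, t)\<close>; thus \<open>r_matrix z w p s q t\<close> is the entry of \<open>r(z, w)\<close> in row \<open>(p, s)\<close>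
  and column \<open>(q, t)\<close>.\<close>

definition r_commutator ::
    "complex \<Rightarrow> complex \<Rightarrow> (nat \<Rightarrow> nat \<Rightarrow> complex) \<Rightarrow> (nat \<Rightarrow> nat \<Rightarrow> complex) \<Rightarrow>
       nat \<Rightarrow> nat \<Rightarrow> nat \<Rightarrow> nat \<Rightarrow> complex" where
  "r_commutator z w X Y p q s t =
     (\<Sum>q'<2. \<Sum>t'<2. X p q' * Y s t' * r_matrix z w q' t' q t)
     - (\<Sum>p'<2. \<Sum>s'<2. r_matrix z w p s p' s' * X p' q * Y s' t)"

text \<open>The correction term is \<open>(z - w) (1 - |\<alpha>|\<^sup>2)\<close> times the contribution of the coordinate \<open>\<alpha>\<close>
  to the bracket, computed from \<open>\<partial>A/\<partial>\<alpha> = -x E\<^sub>1\<^sub>0\<close> and \<open>\<partial>A/\<partial>cnj \<alpha> = -E\<^sub>0\<^sub>1\<close>.\<close>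

lemma r_commutator_szego_step:
  assumes "p < 2" "q < 2" "s < 2" "t < 2"
  shows "r_commutator z w (\<lambda>p q. \<Sum>p'<2. szego_step al z p p' * X p' q)
                          (\<lambda>s t. \<Sum>s'<2. szego_step al w s s' * Y s' t) p q s t =
     (\<Sum>p'<2. \<Sum>s'<2. szego_step al z p p' * szego_step al w s s' * r_commutator z w X Y p' q s' t)
     + (z - w) * (1 - al * cnj al) *
       ((if p = 0 then - X 1 q else 0) * (if s = 0 then 0 else - w * Y 0 t)
        - (if p = 0 then 0 else - z * X 0 q) * (if s = 0 then - Y 1 t else 0))"
  using assms
  by (auto simp: less_2_cases_iff r_commutator_def r_matrix_def szego_step_def sum_lessThan_2 algebra_simps)

text \<open>\<open>pbracket (Suc k)\<close> involves exactly \<open>\<alpha>\<^sub>0, \<dots>, \<alpha>\<^sub>k\<^sub>-\<^sub>1\<close>, the variables of \<open>T\<^sub>k\<close>.\<close>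

lemma pbracket_transfer:
  assumes "z \<noteq> w" "p < 2" "q < 2" "s < 2" "t < 2"
  shows "pbracket (Suc k) (\<lambda>b. transfer k b z p q) (\<lambda>b. transfer k b w s t) a =
           \<i> / (z - w) * r_commutator z w (transfer k a z) (transfer k a w) p q s t"
  using assms(2-)
proof (induction k arbitrary: p q s t)
  case 0
  then show ?case
    by (auto simp: less_2_cases_iff pbracket_def r_commutator_def r_matrix_def sum_lessThan_2)
next
  case (Suc k)
  let ?S = "\<lambda>x p p'. szego_step (a k) x p p'"
  have "pbracket (Suc k) (\<lambda>b. transfer (Suc k) b z p q) (\<lambda>b. transfer (Suc k) b w s t) a =
     (\<Sum>p'<2. \<Sum>s'<2. ?S z p p' * ?S w s s' *
        pbracket (Suc k) (\<lambda>b. transfer k b z p' q) (\<lambda>b. transfer k b w s' t) a)"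
    by (rule pbracket_bilinear)
       (simp_all del: transfer.simps(2) add: wirt_eqI[OF has_wirtinger_derivs_transfer_Suc_below]
         wirt_bar_eqI[OF has_wirtinger_derivs_transfer_Suc_below])
  also have "\<dots> = \<i> / (z - w) *
      (\<Sum>p'<2. \<Sum>s'<2. ?S z p p' * ?S w s s' * r_commutator z w (transfer k a z) (transfer k a w) p' q s' t)"
    using Suc by (simp add: sum_distrib_left mult_ac)
  finally show ?case
    using assms(1) Suc.prems
    unfolding pbracket_Suc_Suc
      wirt_eqI[OF has_wirtinger_derivs_transfer_Suc_last] wirt_bar_eqI[OF has_wirtinger_derivs_transfer_Suc_last]
    by (simp add: transfer_Suc_fun r_commutator_szego_step field_simps)
qed

section \<open>Brackets of \<open>P\<^sub>n\<close>, \<open>Q\<^sub>n\<close>, \<open>F\<^sub>n\<close> and \<open>f\<^sub>n\<close>\<close>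

text \<open>For \<open>cb = cnj \<beta>\<close> this is the first row of \<open>T\<^sub>k\<^sub>+\<^sub>1(x)\<close> with \<open>\<alpha>\<^sub>k\<close> replaced by \<open>\<beta>\<close>.\<close>

definition closed_row :: "nat \<Rightarrow> complex \<Rightarrow> complex \<Rightarrow> nat \<Rightarrow> (nat \<Rightarrow> complex) \<Rightarrow> complex" where
  "closed_row k cb x q b = x * transfer k b x 0 q - cb * transfer k b x 1 q"

lemma closed_row_as_sum:
  "closed_row k cb x 0 b + \<sigma> * closed_row k cb x 1 b =
     (\<Sum>pq\<in>{..<2} \<times> {..<2}. (if fst pq = 0 then x else - cb) * (if snd pq = 0 then 1 else \<sigma>) *
        transfer k b x (fst pq) (snd pq))"
  by (simp add: lessThan_2_times_lessThan_2 closed_row_def algebra_simps)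

lemma pbracket_closed_rows:
  assumes "z \<noteq> w"
  shows "pbracket (Suc k) (\<lambda>b. closed_row k cb z 0 b + \<sigma> * closed_row k cb z 1 b)
                          (\<lambda>b. closed_row k cb w 0 b + \<tau> * closed_row k cb w 1 b) a =
    \<i> / (z - w) * (\<sigma> - \<tau>) *
      (w * closed_row k cb z 0 a * closed_row k cb w 1 a - z * closed_row k cb z 1 a * closed_row k cb w 0 a)"
proof -
  define c where "c x \<rho> pq = (if fst pq = 0 then x else - cb) * (if snd pq = 0 then 1 else \<rho>)"
    for x \<rho> :: complex and pq :: "nat \<times> nat"
  have derivs: "has_wirtinger_derivs (\<lambda>b. closed_row k cb x 0 b + \<rho> * closed_row k cb x 1 b) j a
      (\<Sum>pq\<in>{..<2} \<times> {..<2}. c x \<rho> pq * wirt (\<lambda>b. transfer k b x (fst pq) (snd pq)) j a)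
      (\<Sum>pq\<in>{..<2} \<times> {..<2}. c x \<rho> pq * wirt_bar (\<lambda>b. transfer k b x (fst pq) (snd pq)) j a)" for x \<rho> j
    unfolding closed_row_as_sum c_def
    by (intro has_wirtinger_derivs_sum has_wirtinger_derivs_cmult
          has_wirtinger_derivs_wirt wirtinger_differentiable_transfer)
  have "pbracket (Suc k) (\<lambda>b. closed_row k cb z 0 b + \<sigma> * closed_row k cb z 1 b)
                          (\<lambda>b. closed_row k cb w 0 b + \<tau> * closed_row k cb w 1 b) a =
    (\<Sum>pq\<in>{..<2} \<times> {..<2}. \<Sum>st\<in>{..<2} \<times> {..<2}. c z \<sigma> pq * c w \<tau> st *
       (\<i> / (z - w) * r_commutator z w (transfer k a z) (transfer k a w) (fst pq) (snd pq) (fst st) (snd st)))"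
    by (subst pbracket_bilinear[OF derivs[THEN wirt_eqI] derivs[THEN wirt_bar_eqI]
          derivs[THEN wirt_eqI] derivs[THEN wirt_bar_eqI]])
       (auto intro!: sum.cong simp: pbracket_transfer[OF assms])
  also have "\<dots> = \<i> / (z - w) * (\<sigma> - \<tau>) *
      (w * closed_row k cb z 0 a * closed_row k cb w 1 a - z * closed_row k cb z 1 a * closed_row k cb w 0 a)"
    unfolding lessThan_2_times_lessThan_2
    by (simp add: c_def closed_row_def r_commutator_def r_matrix_def sum_lessThan_2) algebra
  finally show ?thesis .
qed

lemma Pn_closed_row:
  "Pn \<beta> n b x = closed_row (n - 1) (cnj \<beta>) x 0 b + closed_row (n - 1) (cnj \<beta>) x 1 b"
  by (simp add: Pn_def closed_row_def poly_Phi_transfer) (simp add: algebra_simps)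

lemma Qn_closed_row:
  "Qn \<beta> n b x = closed_row (n - 1) (cnj \<beta>) x 0 b - closed_row (n - 1) (cnj \<beta>) x 1 b"
  by (simp add: Qn_def closed_row_def poly_Psi_transfer) (simp add: algebra_simps)

lemma pbracket_Pn_Qn:
  fixes \<beta> z w :: complex and \<alpha> :: "nat \<Rightarrow> complex"
  assumes "n \<ge> 1" "z \<noteq> w"
  defines "Pz \<equiv> Pn \<beta> n \<alpha> z" and "Qz \<equiv> Qn \<beta> n \<alpha> z" and "Pw \<equiv> Pn \<beta> n \<alpha> w" and "Qw \<equiv> Qn \<beta> n \<alpha> w"
  defines "C \<equiv> \<i> / (2 * (z - w)) * (w * (Pz + Qz) * (Pw - Qw) - z * (Pz - Qz) * (Pw + Qw))"
  shows "pbracket n (\<lambda>b. Pn \<beta> n b z) (\<lambda>b. Pn \<beta> n b w) \<alpha> = 0"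
    and "pbracket n (\<lambda>b. Qn \<beta> n b z) (\<lambda>b. Qn \<beta> n b w) \<alpha> = 0"
    and "pbracket n (\<lambda>b. Pn \<beta> n b z) (\<lambda>b. Qn \<beta> n b w) \<alpha> = C"
    and "pbracket n (\<lambda>b. Qn \<beta> n b z) (\<lambda>b. Pn \<beta> n b w) \<alpha> = - C"
proof -
  obtain k where n: "n = Suc k" using assms(1) by (cases n) auto
  have zw: "z - w \<noteq> 0" using assms(2) by simp
  note rows = pbracket_closed_rows[OF assms(2), of k "cnj \<beta>" _ _ \<alpha>]
  have P: "(\<lambda>b. Pn \<beta> n b x) = (\<lambda>b. closed_row k (cnj \<beta>) x 0 b + 1 * closed_row k (cnj \<beta>) x 1 b)" for x
    by (simp add: Pn_closed_row n)
  have Q: "(\<lambda>b. Qn \<beta> n b x) = (\<lambda>b. closed_row k (cnj \<beta>) x 0 b + (-1) * closed_row k (cnj \<beta>) x 1 b)" for x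
    by (simp add: Qn_closed_row n)
  show "pbracket n (\<lambda>b. Pn \<beta> n b z) (\<lambda>b. Pn \<beta> n b w) \<alpha> = 0"
       "pbracket n (\<lambda>b. Qn \<beta> n b z) (\<lambda>b. Qn \<beta> n b w) \<alpha> = 0"
       "pbracket n (\<lambda>b. Pn \<beta> n b z) (\<lambda>b. Qn \<beta> n b w) \<alpha> = C"
       "pbracket n (\<lambda>b. Qn \<beta> n b z) (\<lambda>b. Pn \<beta> n b w) \<alpha> = - C"
    unfolding P Q unfolding n rows C_def Pz_def Qz_def Pw_def Qw_def
    using zw by (simp_all add: Pn_closed_row Qn_closed_row field_simps)
qed

lemma wirtinger_differentiable_closed_row: "wirtinger_differentiable (closed_row k cb x q) j a"
  unfolding wirtinger_differentiable_def closed_row_def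
  using has_wirtinger_derivs_diff[OF
      has_wirtinger_derivs_cmult[OF has_wirtinger_derivs_wirt[OF wirtinger_differentiable_transfer]]
      has_wirtinger_derivs_cmult[OF has_wirtinger_derivs_wirt[OF wirtinger_differentiable_transfer]]]
  by blast

lemma
  shows wirtinger_differentiable_Pn: "wirtinger_differentiable (\<lambda>b. Pn \<beta> n b x) j a"
    and wirtinger_differentiable_Qn: "wirtinger_differentiable (\<lambda>b. Qn \<beta> n b x) j a"
  unfolding Pn_closed_row Qn_closed_row wirtinger_differentiable_def
  by (blast intro: has_wirtinger_derivs_add has_wirtinger_derivs_diff
      has_wirtinger_derivs_wirt[OF wirtinger_differentiable_closed_row])+

lemma has_wirtinger_derivs_Fn:
  assumes "Pn \<beta> n a w \<noteq> 0"
  shows "has_wirtinger_derivs (\<lambda>b. Fn \<beta> n b w) j a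
    (Qn \<beta> n a w / (Pn \<beta> n a w)\<^sup>2 * wirt (\<lambda>b. Pn \<beta> n b w) j a
       + (- 1 / Pn \<beta> n a w) * wirt (\<lambda>b. Qn \<beta> n b w) j a)
    (Qn \<beta> n a w / (Pn \<beta> n a w)\<^sup>2 * wirt_bar (\<lambda>b. Pn \<beta> n b w) j a
       + (- 1 / Pn \<beta> n a w) * wirt_bar (\<lambda>b. Qn \<beta> n b w) j a)"
proof -
  have F: "(\<lambda>b. Fn \<beta> n b w) = (\<lambda>b. Qn \<beta> n b w * (\<lambda>y. - 1 / y) (Pn \<beta> n b w))"
    by (simp add: fun_eq_iff Fn_def)
  have "((\<lambda>y. - 1 / y) has_field_derivative 1 / (Pn \<beta> n a w)\<^sup>2) (at (Pn \<beta> n a w))"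
    using assms by (auto intro!: derivative_eq_intros simp: power2_eq_square)
  from has_wirtinger_derivs_mult[OF has_wirtinger_derivs_wirt[OF wirtinger_differentiable_Qn]
      has_wirtinger_derivs_compose[OF has_wirtinger_derivs_wirt[OF wirtinger_differentiable_Pn] this]]
  show ?thesis
    unfolding F by (rule has_wirtinger_derivs_eq_rhs) (simp_all add: algebra_simps)
qed

lemma pbracket_right_Fn:
  assumes "Pn \<beta> n a w \<noteq> 0"
  shows "pbracket n G (\<lambda>b. Fn \<beta> n b w) a =
           Qn \<beta> n a w / (Pn \<beta> n a w)\<^sup>2 * pbracket n G (\<lambda>b. Pn \<beta> n b w) a
           - 1 / Pn \<beta> n a w * pbracket n G (\<lambda>b. Qn \<beta> n b w) a"
  using pbracket_right_linear[OF has_wirtinger_derivs_Fn[OF assms]] by simp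

lemma pbracket_right_fn_small:
  assumes "Pn \<beta> n a w \<noteq> 0" "w \<noteq> 0" "Fn \<beta> n a w + 1 \<noteq> 0"
  shows "pbracket n G (\<lambda>b. fn_small \<beta> n b w) a =
           2 / (w * (Fn \<beta> n a w + 1)\<^sup>2) * pbracket n G (\<lambda>b. Fn \<beta> n b w) a"
proof -
  define g where "g y = 1 / w * ((y - 1) / (y + 1))" for y :: complex
  have g: "(g has_field_derivative 2 / (w * (F + 1)\<^sup>2)) (at F)" if "F + 1 \<noteq> 0" for F
    using assms(2) that unfolding g_def
    by (auto intro!: derivative_eq_intros simp: divide_simps) (simp add: algebra_simps power2_eq_square)
  have F: "wirtinger_differentiable (\<lambda>b. Fn \<beta> n b w) j a" for j
    using has_wirtinger_derivs_Fn[OF assms(1)] unfolding wirtinger_differentiable_def by blast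
  have "(\<lambda>b. fn_small \<beta> n b w) = (\<lambda>b. g (Fn \<beta> n b w))"
    by (simp add: fun_eq_iff fn_small_def g_def)
  then show ?thesis
    using pbracket_right_compose[OF F g[OF assms(3)]] by simp
qed

lemma Fn_add_1:
  "Pn \<beta> n \<alpha> w \<noteq> 0 \<Longrightarrow> Fn \<beta> n \<alpha> w + 1 = (Pn \<beta> n \<alpha> w - Qn \<beta> n \<alpha> w) / Pn \<beta> n \<alpha> w"
  by (simp add: Fn_def field_simps)

lemma fn_small_eq:
  assumes "Pn \<beta> n \<alpha> w \<noteq> 0" "Fn \<beta> n \<alpha> w + 1 \<noteq> 0"
  shows "fn_small \<beta> n \<alpha> w = - (Pn \<beta> n \<alpha> w + Qn \<beta> n \<alpha> w) / (w * (Pn \<beta> n \<alpha> w - Qn \<beta> n \<alpha> w))"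
  using assms by (simp add: fn_small_def Fn_add_1) (simp add: Fn_def field_simps)

lemma Wn_eq_pbracket:
  assumes "n \<ge> 1" "z \<noteq> w" "Pn \<beta> n \<alpha> w \<noteq> 0" "w \<noteq> 0" "Fn \<beta> n \<alpha> w + 1 \<noteq> 0"
  shows "Wn \<beta> n \<alpha> z w = - pbracket n (\<lambda>a. Pn \<beta> n a z) (\<lambda>a. Qn \<beta> n a w) \<alpha>
                              / (w * (Pn \<beta> n \<alpha> w - Qn \<beta> n \<alpha> w))"
proof -
  have "z - w \<noteq> 0" "Pn \<beta> n \<alpha> w - Qn \<beta> n \<alpha> w \<noteq> 0"
    using assms by (auto simp: Fn_add_1)
  with assms(4) show ?thesis
    unfolding pbracket_Pn_Qn(3)[OF assms(1,2)] Wn_def fn_small_eq[OF assms(3,5)]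
    by (simp add: field_simps)
qed

lemma pbracket_Pn_Fn:
  assumes "n \<ge> 1" "z \<noteq> w" "Pn \<beta> n \<alpha> w \<noteq> 0"
  shows "pbracket n (\<lambda>a. Pn \<beta> n a z) (\<lambda>a. Fn \<beta> n a w) \<alpha> =
           - (\<i> / 2) * ((Pn \<beta> n \<alpha> z * Fn \<beta> n \<alpha> w + Qn \<beta> n \<alpha> z) * ((z + w) / (z - w))
                        - Pn \<beta> n \<alpha> z - Qn \<beta> n \<alpha> z * Fn \<beta> n \<alpha> w)"
proof -
  have "z - w \<noteq> 0" using assms(2) by simp
  with assms(3) show ?thesis
    unfolding pbracket_right_Fn[OF assms(3)] pbracket_Pn_Qn[OF assms(1,2)] unfolding Fn_def
    by (simp add: field_simps)
qed

lemma pbracket_Qn_Fn: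
  assumes "n \<ge> 1" "z \<noteq> w" "Pn \<beta> n \<alpha> w \<noteq> 0"
  shows "pbracket n (\<lambda>a. Qn \<beta> n a z) (\<lambda>a. Fn \<beta> n a w) \<alpha> =
           - Fn \<beta> n \<alpha> w * pbracket n (\<lambda>a. Pn \<beta> n a z) (\<lambda>a. Fn \<beta> n a w) \<alpha>"
  using assms(3)
  unfolding pbracket_right_Fn[OF assms(3)] pbracket_Pn_Qn[OF assms(1,2)] unfolding Fn_def
  by (simp add: field_simps power2_eq_square)

lemma pbracket_Pn_Qn_fn_small:
  assumes "n \<ge> 1" "z \<noteq> w" "Pn \<beta> n \<alpha> w \<noteq> 0" "w \<noteq> 0" "Fn \<beta> n \<alpha> w + 1 \<noteq> 0"
  shows "pbracket n (\<lambda>a. Pn \<beta> n a z) (\<lambda>a. fn_small \<beta> n a w) \<alpha> =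
           (1 - w * fn_small \<beta> n \<alpha> w) * Wn \<beta> n \<alpha> z w"
    and "pbracket n (\<lambda>a. Qn \<beta> n a z) (\<lambda>a. fn_small \<beta> n a w) \<alpha> =
           - (1 + w * fn_small \<beta> n \<alpha> w) * Wn \<beta> n \<alpha> z w"
proof -
  define d where "d = Pn \<beta> n \<alpha> w - Qn \<beta> n \<alpha> w"
  have "d \<noteq> 0" using assms(3,5) by (auto simp: d_def Fn_add_1)
  have Q: "Qn \<beta> n \<alpha> w = Pn \<beta> n \<alpha> w - d" by (simp add: d_def)
  have QP: "pbracket n (\<lambda>a. Qn \<beta> n a z) (\<lambda>a. Pn \<beta> n a w) \<alpha> =
      - pbracket n (\<lambda>a. Pn \<beta> n a z) (\<lambda>a. Qn \<beta> n a w) \<alpha>"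
    using pbracket_Pn_Qn(3,4)[OF assms(1,2)] by simp
  note brackets = pbracket_right_fn_small[OF assms(3-5)] pbracket_right_Fn[OF assms(3)]
    pbracket_Pn_Qn(1,2)[OF assms(1,2)] QP Fn_add_1[OF assms(3)] fn_small_eq[OF assms(3,5)]
    Wn_eq_pbracket[OF assms]
  show "pbracket n (\<lambda>a. Pn \<beta> n a z) (\<lambda>a. fn_small \<beta> n a w) \<alpha> =
          (1 - w * fn_small \<beta> n \<alpha> w) * Wn \<beta> n \<alpha> z w"
       "pbracket n (\<lambda>a. Qn \<beta> n a z) (\<lambda>a. fn_small \<beta> n a w) \<alpha> =
          - (1 + w * fn_small \<beta> n \<alpha> w) * Wn \<beta> n \<alpha> z w"
    using assms(3,4) \<open>d \<noteq> 0\<close> unfolding brackets d_def[symmetric] unfolding Q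
    by (simp_all add: field_simps power2_eq_square)
qed

theorem theorem13p2:
  fixes n :: nat and \<beta> z w :: complex and \<alpha> :: "nat \<Rightarrow> complex"
  assumes "n \<ge> 1"
    and "cmod \<beta> = 1"
    and "\<forall>j < n - 1. cmod (\<alpha> j) < 1"
  shows "(Pn \<beta> n \<alpha> w \<noteq> 0 \<and> z \<noteq> w \<longrightarrow>
           pbracket n (\<lambda>a. Pn \<beta> n a z) (\<lambda>a. Fn \<beta> n a w) \<alpha> =
             - (\<i> / 2) * ((Pn \<beta> n \<alpha> z * Fn \<beta> n \<alpha> w + Qn \<beta> n \<alpha> z) * ((z + w) / (z - w))
                          - Pn \<beta> n \<alpha> z - Qn \<beta> n \<alpha> z * Fn \<beta> n \<alpha> w)
         \<and> pbracket n (\<lambda>a. Qn \<beta> n a z) (\<lambda>a. Fn \<beta> n a w) \<alpha> =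
             - Fn \<beta> n \<alpha> w * pbracket n (\<lambda>a. Pn \<beta> n a z) (\<lambda>a. Fn \<beta> n a w) \<alpha>)
       \<and> (Pn \<beta> n \<alpha> w \<noteq> 0 \<and> z \<noteq> w \<and> w \<noteq> 0 \<and> Fn \<beta> n \<alpha> w + 1 \<noteq> 0 \<longrightarrow>
           pbracket n (\<lambda>a. Pn \<beta> n a z) (\<lambda>a. fn_small \<beta> n a w) \<alpha> =
             (1 - w * fn_small \<beta> n \<alpha> w) * Wn \<beta> n \<alpha> z w
         \<and> pbracket n (\<lambda>a. Qn \<beta> n a z) (\<lambda>a. fn_small \<beta> n a w) \<alpha> =
             - (1 + w * fn_small \<beta> n \<alpha> w) * Wn \<beta> n \<alpha> z w)"
  using pbracket_Pn_Fn[OF assms(1)] pbracket_Qn_Fn[OF assms(1)] pbracket_Pn_Qn_fn_small[OF assms(1)]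
  by blast

end
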